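(* Let $P,Q$ be nonzero coprime integers with $\Delta:=P^2-4Q\neq0$, such that $\alpha/\beta$ is not a root of unity, where $\alpha,\beta$ are the roots of $x^2-Px+Q$. Let $(U_n)$ be the Lucas sequence $U_n=(\alpha^n-\beta^n)/(\alpha-\beta)$. Then for every positive integer $n$, \[\mathrm{lcm}(U_1,U_2,\dots,U_n)=\mathrm{lcm}\left(U_n,U_{n-1},\dots,U_{n-\lceil n/2\rceil+1}\right).\]
   Context: $U_0=0$, $U_1=1$, $U_{n+2}=PU_{n+1}-QU_n$. *)

theory Defs
  imports Complex_Main
begin

fun lucasU :: "int \<Rightarrow> int \<Rightarrow> nat \<Rightarrow> int" where
  "lucasU P Q 0 = 0"
| "lucasU P Q (Suc 0) = 1"
| "lucasU P Q (Suc (Suc n)) = P * lucasU P Q (Suc n) - Q * lucasU P Q n"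

definition lucas_alpha :: "int \<Rightarrow> int \<Rightarrow> complex" where
  "lucas_alpha P Q = (of_int P + csqrt (of_int (P^2 - 4*Q))) / 2"

definition lucas_beta :: "int \<Rightarrow> int \<Rightarrow> complex" where
  "lucas_beta P Q = (of_int P - csqrt (of_int (P^2 - 4*Q))) / 2"

definition root_of_unity :: "complex \<Rightarrow> bool" where
  "root_of_unity z \<longleftrightarrow> (\<exists>k::nat. k \<ge> 1 \<and> z ^ k = 1)"

end

theory Submission
  imports Defs
begin

text \<open>Lucas sequences are divisibility sequences, \<open>U\<^sub>k dvd U\<^sub>k\<^sub>m\<close>, and every
  \<open>k \<le> n\<close> has a multiple in the upper half \<open>(n/2, n]\<close>, namely \<open>k \<lfloor>n/k\<rfloor>\<close>.
  Hence each \<open>U\<^sub>k\<close> with \<open>k \<le> n\<close> divides a term of the right-hand side, and the two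
  least common multiples coincide.\<close>

lemma lucasU_add:
  "lucasU P Q (m + n + 1) = lucasU P Q (m + 1) * lucasU P Q (n + 1) - Q * lucasU P Q m * lucasU P Q n"
proof (induction P Q n rule: lucasU.induct)
  case (3 P Q n)
  have "lucasU P Q (m + Suc (Suc n) + 1)
        = P * lucasU P Q (m + Suc n + 1) - Q * lucasU P Q (m + n + 1)"
    by (simp add: add.commute)
  then show ?case
    unfolding 3 by (simp add: algebra_simps)
qed (simp_all add: algebra_simps)

lemma lucasU_dvd_mult: "lucasU P Q k dvd lucasU P Q (k * c)"
proof (induction c)
  case (Suc c)
  show ?case
  proof (cases k)
    case (Suc j)
    then have "lucasU P Q (k * Suc c)
               = lucasU P Q (k * c + 1) * lucasU P Q k - Q * lucasU P Q (k * c) * lucasU P Q j"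
      using lucasU_add[of P Q "k * c" j] by (simp add: add.commute add.left_commute)
    then show ?thesis
      using Suc.IH by simp
  qed simp
qed simp

lemma lucasU_dvd: "k dvd n \<Longrightarrow> lucasU P Q k dvd lucasU P Q n"
  using lucasU_dvd_mult by (elim dvdE) simp

lemma mult_div_in_upper_half:
  fixes k n :: nat
  assumes "0 < k" "k \<le> n"
  shows "n div 2 < k * (n div k)" "k * (n div k) \<le> n"
proof -
  have "n mod k < k" "k * (n div k) + n mod k = n" "k \<le> k * (n div k)"
    using assms by (simp_all add: mult.commute Suc_le_eq div_greater_zero_iff)
  then show "n div 2 < k * (n div k)"
    using assms(2) by linarith
qed simp

lemma Lcm_divisibility_sequence_upper_half:
  fixes f :: "nat \<Rightarrow> 'a::semiring_Gcd"
  assumes "\<And>k m. k dvd m \<Longrightarrow> f k dvd f m"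
  shows "Lcm (f ` {1..n}) = Lcm (f ` {n div 2 + 1..n})"
proof (rule associated_eqI[OF _ _ normalize_Lcm normalize_Lcm])
  show "Lcm (f ` {1..n}) dvd Lcm (f ` {n div 2 + 1..n})"
  proof (rule Lcm_least, clarify)
    fix k assume k: "k \<in> {1..n}"
    then have "k * (n div k) \<in> {n div 2 + 1..n}"
      using mult_div_in_upper_half[of k n] by auto
    then have "f (k * (n div k)) dvd Lcm (f ` {n div 2 + 1..n})"
      by (intro dvd_Lcm imageI)
    then show "f k dvd Lcm (f ` {n div 2 + 1..n})"
      using assms[of k "k * (n div k)"] by (auto intro: dvd_trans)
  qed
  show "Lcm (f ` {n div 2 + 1..n}) dvd Lcm (f ` {1..n})"
    by (intro Lcm_subset image_mono) auto
qed

lemma nat_minus_ceiling_half: "n - nat \<lceil>real n / 2\<rceil> = n div 2"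
proof -
  have "\<lceil>real n / 2\<rceil> = int (n - n div 2)"
    by (subst ceiling_eq_iff) linarith
  then show ?thesis by simp
qed

theorem corollary5:
  fixes P Q :: int and n :: nat
  assumes "P \<noteq> 0" and "Q \<noteq> 0" and "coprime P Q"
    and "P^2 - 4*Q \<noteq> 0"
    and "\<not> root_of_unity (lucas_alpha P Q / lucas_beta P Q)"
    and "n \<ge> 1"
  shows "Lcm (lucasU P Q ` {1..n}) =
         Lcm (lucasU P Q ` {n - nat \<lceil>real n / 2\<rceil> + 1..n})"
  unfolding nat_minus_ceiling_half
  using lucasU_dvd by (rule Lcm_divisibility_sequence_upper_half)

end
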